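(* Let $0\le E^C_1\le E^C_2\le\cdots$ be a non-decreasing sequence of nonnegative reals with $\lim_{n\to\infty}E^C_n=\infty$, let $\beta>0$, $\gamma=e^{-\beta}\in(0,1)$, and let $E\ge E^C_1$. Let $$\varepsilon_C=\inf\Big\{\sum_{j=1}^\infty\omega_je^{-\beta E^C_j}\ :\ \omega_j\ge0\ \forall j,\ \sum_{j=1}^\infty\omega_j=1,\ \sum_{j=1}^\infty E^C_j\omega_j\le E\Big\}.$$ For $0<W<1$ let $j(W)=\min\{j\ge1: E^C_{j+1}>E/(1-W)\}$. Then $$\varepsilon_C\ \ge\ \sup_{W\in(0,1)} W\,\gamma^{E^C_{j(W)}}>0.$$ *)

theory Defs
  imports Complex_Main
begin

text \<open>Sequences are indexed from 1; the value at index 0 is irrelevant.\<close>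

definition epsC :: "(nat \<Rightarrow> real) \<Rightarrow> real \<Rightarrow> real \<Rightarrow> real" where
  "epsC EC \<beta> E = Inf {s. \<exists>\<omega> :: nat \<Rightarrow> real.
      (\<forall>j\<ge>1. \<omega> j \<ge> 0) \<and>
      (\<lambda>j. \<omega> (Suc j)) sums 1 \<and>
      summable (\<lambda>j. EC (Suc j) * \<omega> (Suc j)) \<and>
      (\<Sum>j. EC (Suc j) * \<omega> (Suc j)) \<le> E \<and>
      (\<lambda>j. \<omega> (Suc j) * exp (- \<beta> * EC (Suc j))) sums s}"

definition jW :: "(nat \<Rightarrow> real) \<Rightarrow> real \<Rightarrow> real \<Rightarrow> nat" where
  "jW EC E W = (LEAST j. j \<ge> 1 \<and> EC (Suc j) > E / (1 - W))"

end

theory Submission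
  imports Defs
begin

text \<open>Fix 0 < W < 1 and J = j(W), so that M = E^C_(J+1) > E/(1 - W). Markov's inequality
  bounds the mass that an admissible weight sequence puts on the levels j > J, whose energies
  are at least M, by E/M < 1 - W. Hence the levels 1, ..., J carry mass more than W, and each
  of them contributes at least \<gamma>^(E^C_J) per unit mass.\<close>

lemma markov_tail_bound:
  fixes a f :: "nat \<Rightarrow> real"
  assumes a_nonneg: "\<And>j. 0 \<le> a j" and f_nonneg: "\<And>j. 0 \<le> f j"
    and "summable a" and fa_summable: "summable (\<lambda>j. f j * a j)"
    and tail_ge: "\<And>j. J \<le> j \<Longrightarrow> M \<le> f j"
  shows "M * ((\<Sum>j. a j) - (\<Sum>j<J. a j)) \<le> (\<Sum>j. f j * a j)"
proof -
  have tail_a: "(\<Sum>j. a j) - (\<Sum>j<J. a j) = (\<Sum>j. a (j + J))"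
    using suminf_split_initial_segment[OF \<open>summable a\<close>, of J] by simp
  have tail_summable: "summable (\<lambda>j. a (j + J))"
    using \<open>summable a\<close> by (simp add: summable_iff_shift)
  have "M * (\<Sum>j. a (j + J)) = (\<Sum>j. M * a (j + J))"
    using suminf_mult[OF tail_summable] by simp
  also have "\<dots> \<le> (\<Sum>j. f (j + J) * a (j + J))"
  proof (rule suminf_le)
    show "M * a (j + J) \<le> f (j + J) * a (j + J)" for j
      using tail_ge a_nonneg by (simp add: mult_right_mono)
    show "summable (\<lambda>j. M * a (j + J))"
      using tail_summable by (rule summable_mult)
    show "summable (\<lambda>j. f (j + J) * a (j + J))"
      using summable_iff_shift[where f="\<lambda>j. f j * a j"] fa_summable by blast
  qed
  also have "\<dots> \<le> (\<Sum>j. f j * a j)"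
    using suminf_split_initial_segment[OF fa_summable, of J] a_nonneg f_nonneg
    by (simp add: sum_nonneg)
  finally show ?thesis by (simp add: tail_a)
qed

lemma head_mass_ge:
  fixes a f :: "nat \<Rightarrow> real"
  assumes a_nonneg: "\<And>j. 0 \<le> a j" and f_nonneg: "\<And>j. 0 \<le> f j"
    and "a sums 1" and fa_summable: "summable (\<lambda>j. f j * a j)"
    and energy: "(\<Sum>j. f j * a j) \<le> E"
    and "W < 1" and M_gt: "E / (1 - W) < M"
    and tail_ge: "\<And>j. J \<le> j \<Longrightarrow> M \<le> f j"
  shows "W \<le> (\<Sum>j<J. a j)"
proof -
  have "0 \<le> E"
    using energy suminf_nonneg[OF fa_summable] a_nonneg f_nonneg
    by (meson mult_nonneg_nonneg order_trans)
  then have "0 < M"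
    using M_gt \<open>W < 1\<close> by (smt (verit) divide_nonneg_pos)
  have "M * ((\<Sum>j. a j) - (\<Sum>j<J. a j)) \<le> (\<Sum>j. f j * a j)"
    using a_nonneg f_nonneg sums_summable[OF \<open>a sums 1\<close>] fa_summable tail_ge
    by (rule markov_tail_bound)
  then have "M * (1 - (\<Sum>j<J. a j)) \<le> E"
    using sums_unique[OF \<open>a sums 1\<close>] energy by simp
  also have "E < M * (1 - W)"
    using M_gt \<open>W < 1\<close> by (simp add: divide_less_eq mult.commute)
  finally show ?thesis
    using \<open>0 < M\<close> by (simp add: mult_less_cancel_left)
qed

lemma head_weighted_sum_le:
  fixes a g :: "nat \<Rightarrow> real"
  assumes a_nonneg: "\<And>j. 0 \<le> a j" and g_nonneg: "\<And>j. 0 \<le> g j"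
    and ag_sums: "(\<lambda>j. a j * g j) sums s"
    and head_ge: "\<And>j. j < J \<Longrightarrow> c \<le> g j"
  shows "(\<Sum>j<J. a j) * c \<le> s"
proof -
  have "(\<Sum>j<J. a j) * c = (\<Sum>j<J. a j * c)"
    by (simp add: sum_distrib_right)
  also have "\<dots> \<le> (\<Sum>j<J. a j * g j)"
    using head_ge a_nonneg by (intro sum_mono mult_left_mono) auto
  also have "\<dots> \<le> s"
    using sum_le_suminf[OF sums_summable[OF ag_sums], of "{..<J}"] sums_unique[OF ag_sums]
      a_nonneg g_nonneg by simp
  finally show ?thesis .
qed

lemma jW_spec:
  fixes EC :: "nat \<Rightarrow> real"
  assumes "filterlim EC at_top sequentially"
  shows "1 \<le> jW EC E W" and "E / (1 - W) < EC (Suc (jW EC E W))"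
proof -
  obtain n where "\<forall>m\<ge>n. E / (1 - W) < EC m"
    using assms by (auto simp: filterlim_at_top_dense eventually_sequentially)
  then have "1 \<le> Suc n \<and> E / (1 - W) < EC (Suc (Suc n))"
    by simp
  then have "1 \<le> jW EC E W \<and> E / (1 - W) < EC (Suc (jW EC E W))"
    unfolding jW_def by (rule LeastI)
  then show "1 \<le> jW EC E W" and "E / (1 - W) < EC (Suc (jW EC E W))"
    by auto
qed

lemma le_epsC:
  fixes EC :: "nat \<Rightarrow> real"
  assumes "EC 1 \<le> E"
    and lower: "\<And>\<omega> s. \<forall>j\<ge>1. 0 \<le> \<omega> j \<Longrightarrow> (\<lambda>j. \<omega> (Suc j)) sums 1
      \<Longrightarrow> summable (\<lambda>j. EC (Suc j) * \<omega> (Suc j)) \<Longrightarrow> (\<Sum>j. EC (Suc j) * \<omega> (Suc j)) \<le> E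
      \<Longrightarrow> (\<lambda>j. \<omega> (Suc j) * exp (- \<beta> * EC (Suc j))) sums s \<Longrightarrow> c \<le> s"
  shows "c \<le> epsC EC \<beta> E"
  unfolding epsC_def
proof (rule cInf_greatest)
  define \<delta> :: "nat \<Rightarrow> real" where "\<delta> j = (if j = 1 then 1 else 0)" for j
  have point_mass: "(\<lambda>j. \<delta> (Suc j) * h (Suc j)) sums h 1" for h :: "nat \<Rightarrow> real"
  proof -
    have "(\<lambda>j. \<delta> (Suc j) * h (Suc j)) = (\<lambda>j. if j = 0 then h 1 else 0)"
      by (auto simp: \<delta>_def)
    then show ?thesis
      using sums_single[of 0 "\<lambda>_. h 1"] by simp
  qed
  have "(\<lambda>j. EC (Suc j) * \<delta> (Suc j)) sums EC 1"
    using point_mass[of EC] by (simp add: mult.commute)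
  moreover have "(\<lambda>j. \<delta> (Suc j) * exp (- \<beta> * EC (Suc j))) sums exp (- \<beta> * EC 1)"
    using point_mass[of "\<lambda>j. exp (- \<beta> * EC j)"] by simp
  moreover have "(\<lambda>j. \<delta> (Suc j)) sums 1"
    using point_mass[of "\<lambda>_. 1"] by simp
  ultimately show "{s. \<exists>\<omega>. (\<forall>j\<ge>1. 0 \<le> \<omega> j) \<and> (\<lambda>j. \<omega> (Suc j)) sums 1
      \<and> summable (\<lambda>j. EC (Suc j) * \<omega> (Suc j)) \<and> (\<Sum>j. EC (Suc j) * \<omega> (Suc j)) \<le> E
      \<and> (\<lambda>j. \<omega> (Suc j) * exp (- \<beta> * EC (Suc j))) sums s} \<noteq> {}"
    using \<open>EC 1 \<le> E\<close> by (auto simp: \<delta>_def sums_iff intro!: exI[of _ \<delta>])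
qed (use lower in blast)

lemma admissible_sum_ge:
  fixes EC \<omega> :: "nat \<Rightarrow> real"
  assumes "0 \<le> EC 1" and step: "\<And>j. 1 \<le> j \<Longrightarrow> EC j \<le> EC (Suc j)"
    and "filterlim EC at_top sequentially" and "0 \<le> \<beta>" and "W < 1"
    and \<omega>_nonneg: "\<forall>j\<ge>1. 0 \<le> \<omega> j" and \<omega>_sums: "(\<lambda>j. \<omega> (Suc j)) sums 1"
    and energy_summable: "summable (\<lambda>j. EC (Suc j) * \<omega> (Suc j))"
    and energy: "(\<Sum>j. EC (Suc j) * \<omega> (Suc j)) \<le> E"
    and value_sums: "(\<lambda>j. \<omega> (Suc j) * exp (- \<beta> * EC (Suc j))) sums s"
  shows "W * exp (- \<beta> * EC (jW EC E W)) \<le> s"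
proof -
  define J where "J = jW EC E W"
  have "1 \<le> J" and M_gt: "E / (1 - W) < EC (Suc J)"
    using jW_spec[OF \<open>filterlim EC at_top sequentially\<close>] by (auto simp: J_def)
  have mono: "incseq (\<lambda>j. EC (Suc j))"
    using step by (intro incseq_SucI) simp
  have EC_nonneg: "0 \<le> EC (Suc j)" for j
    using incseqD[OF mono, of 0 j] \<open>0 \<le> EC 1\<close> by simp
  have head_le: "EC (Suc j) \<le> EC J" if "j < J" for j
    using incseqD[OF mono, of j "J - 1"] that \<open>1 \<le> J\<close> by simp
  have "W \<le> (\<Sum>j<J. \<omega> (Suc j))"
    using \<omega>_nonneg EC_nonneg \<omega>_sums energy_summable energy \<open>W < 1\<close> M_gt incseqD[OF mono]
    by (intro head_mass_ge[where f = "\<lambda>j. EC (Suc j)" and M = "EC (Suc J)"]) auto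
  moreover have "(\<Sum>j<J. \<omega> (Suc j)) * exp (- \<beta> * EC J) \<le> s"
    using \<omega>_nonneg value_sums head_le \<open>0 \<le> \<beta>\<close>
    by (intro head_weighted_sum_le[where g = "\<lambda>j. exp (- \<beta> * EC (Suc j))"])
      (auto intro: mult_left_mono)
  ultimately show ?thesis
    unfolding J_def by (meson exp_ge_zero mult_right_mono order_trans)
qed

theorem mainTheorem7:
  fixes EC :: "nat \<Rightarrow> real" and \<beta> \<gamma> E :: real
  assumes "0 \<le> EC 1"
    and "\<And>j. j \<ge> 1 \<Longrightarrow> EC j \<le> EC (Suc j)"
    and "filterlim EC at_top sequentially"
    and "\<beta> > 0" and "\<gamma> = exp (- \<beta>)"
    and "E \<ge> EC 1"
  shows "(SUP W\<in>{0<..<1::real}. W * \<gamma> powr EC (jW EC E W)) \<le> epsC EC \<beta> E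
       \<and> (SUP W\<in>{0<..<1::real}. W * \<gamma> powr EC (jW EC E W)) > 0"
proof -
  have \<gamma>_powr: "\<gamma> powr x = exp (- \<beta> * x)" for x
    using \<open>\<gamma> = exp (- \<beta>)\<close> by (simp add: powr_def)
  have value_le: "W * \<gamma> powr EC (jW EC E W) \<le> epsC EC \<beta> E" if "W \<in> {0<..<1}" for W
    using that assms admissible_sum_ge[of EC \<beta> W] unfolding \<gamma>_powr
    by (intro le_epsC) auto
  have bdd: "bdd_above ((\<lambda>W. W * \<gamma> powr EC (jW EC E W)) ` {0<..<1})"
    using value_le by (rule bdd_aboveI2)
  have "0 < (1/2) * \<gamma> powr EC (jW EC E (1/2))"
    by (simp add: \<gamma>_powr)
  also have "\<dots> \<le> (SUP W\<in>{0<..<1::real}. W * \<gamma> powr EC (jW EC E W))"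
    using bdd by (intro cSUP_upper) auto
  finally show ?thesis
    using value_le by (auto intro: cSUP_least)
qed

end
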